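(* Let $G$ be a mean-payoff game with partial-observation and $G'$ its limited-observation counterpart (defined below). Eve has a winning observation-based strategy in $G$ if and only if she has a winning observation-based strategy in $G'$.
   Context: An MPG with partial-observation is a tuple $G=\langle Q,q_I,\Sigma,\Delta,w,Obs\rangle$: $Q$ finite set of states, $q_I\in Q$, $\Sigma$ finite set of actions, $\Delta\subseteq Q\times\Sigma\times Q$ total, $w:\Delta\to\mathbb{Z}$, $Obs$ a partition of $Q$. $\mathrm{post}_\sigma(s)=\{q':\exists q\in s,(q,\sigma,q')\in\Delta\}$. Plays are infinite abstract paths $o_0\sigma_0o_1\ldots$ ($o_i\in Obs$, with some $\sigma_i$-transition from a state of $o_i$ to a state of $o_{i+1}$) starting at the observation containing the initial state; $\gamma(\psi)$ is the set of concrete paths $q_0\sigma_0q_1\ldots$ with $q_i\in o_i$ and $(q_i,\sigma_i,q_{i+1})\in\Delta$; $\underline{MP}(\pi)=\liminf_n\frac1n\sum_{i<n}w(q_i,\sigma_i,q_{i+1})$. An observation-based strategy for Eve maps finite play prefixes ending in an observation to actions; a play $o_0\sigma_0\ldots$ is consistent with $\lambda$ if $\sigma_i=\lambda(o_0\sigma_0\ldots o_i)$; $\lambda$ is winning if every consistent play $\psi$ satisfies $\underline{MP}(\pi)\ge0$ for all $\pi\in\gamma(\psi)$. The limited-observation counterpart of $G$ is $G'=\langle Q',q'_I,\Sigma,\Delta',w',Obs'\rangle$ with $Q'=\{(q,K)\in Q\times2^Q: q\in K,\ K\subseteq o\text{ for some }o\in Obs\}$, $q'_I=(q_I,\{q_I\})$,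 $Obs'=\{\{(q,K):q\in K\}: \emptyset\ne K\subseteq o\text{ for some }o\in Obs\}$, $\Delta'$ consisting of the triples $((q,K),\sigma,(q',K'))$ with $(q,\sigma,q')\in\Delta$ and $K'=\mathrm{post}_\sigma(K)\cap o$ for some $o\in Obs$, and $w'((q,K),\sigma,(q',K'))=w(q,\sigma,q')$. *)

theory Defs
  imports "HOL-Library.Extended_Real" "HOL-Library.Liminf_Limsup" "HOL-Library.Disjoint_Sets"
begin

record ('q, 'a) mpg =
  states  :: "'q set"
  init    :: "'q"
  actions :: "'a set"
  trans   :: "('q \<times> 'a \<times> 'q) set"
  weight  :: "'q \<times> 'a \<times> 'q \<Rightarrow> int"
  obs     :: "'q set set"

definition mpg_po :: "('q, 'a) mpg \<Rightarrow> bool" where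
  "mpg_po G \<longleftrightarrow>
     finite (states G) \<and> init G \<in> states G \<and> finite (actions G) \<and>
     trans G \<subseteq> states G \<times> actions G \<times> states G \<and>
     (\<forall>q\<in>states G. \<forall>\<sigma>\<in>actions G. \<exists>q'. (q, \<sigma>, q') \<in> trans G) \<and>
     partition_on (states G) (obs G)"

definition post :: "('q, 'a) mpg \<Rightarrow> 'a \<Rightarrow> 'q set \<Rightarrow> 'q set" where
  "post G \<sigma> s = {q'. \<exists>q\<in>s. (q, \<sigma>, q') \<in> trans G}"

text \<open>A play o0 s0 o1 s1 ... is represented by the sequences os (observations) and as (actions).\<close>
definition is_play :: "('q, 'a) mpg \<Rightarrow> (nat \<Rightarrow> 'q set) \<Rightarrow> (nat \<Rightarrow> 'a) \<Rightarrow> bool" where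
  "is_play G os as \<longleftrightarrow>
     init G \<in> os 0 \<and>
     (\<forall>i. os i \<in> obs G \<and> as i \<in> actions G \<and>
          (\<exists>q\<in>os i. \<exists>q'\<in>os (Suc i). (q, as i, q') \<in> trans G))"

definition concretisation :: "('q, 'a) mpg \<Rightarrow> (nat \<Rightarrow> 'q set) \<Rightarrow> (nat \<Rightarrow> 'a) \<Rightarrow> (nat \<Rightarrow> 'q) set" where
  "concretisation G os as =
     {qs. qs 0 = init G \<and> (\<forall>i. qs i \<in> os i \<and> (qs i, as i, qs (Suc i)) \<in> trans G)}"

definition low_mp :: "('q, 'a) mpg \<Rightarrow> (nat \<Rightarrow> 'q) \<Rightarrow> (nat \<Rightarrow> 'a) \<Rightarrow> ereal" where
  "low_mp G qs as =
     liminf (\<lambda>n. ereal ((\<Sum>i<n. real_of_int (weight G (qs i, as i, qs (Suc i)))) / real n))"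

text \<open>Observation-based strategy: the prefix o0 s0 ... o_n is given by the list of
  observations [o0..o_n] and the list of actions [s0..s_(n-1)].\<close>
type_synonym ('q, 'a) strategy = "'q set list \<Rightarrow> 'a list \<Rightarrow> 'a"

definition obs_strategy :: "('q, 'a) mpg \<Rightarrow> ('q, 'a) strategy \<Rightarrow> bool" where
  "obs_strategy G str \<longleftrightarrow> (\<forall>ol al. str ol al \<in> actions G)"

definition consistent :: "('q, 'a) strategy \<Rightarrow> (nat \<Rightarrow> 'q set) \<Rightarrow> (nat \<Rightarrow> 'a) \<Rightarrow> bool" where
  "consistent str os as \<longleftrightarrow> (\<forall>i. as i = str (map os [0..<Suc i]) (map as [0..<i]))"

definition winning :: "('q, 'a) mpg \<Rightarrow> ('q, 'a) strategy \<Rightarrow> bool" where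
  "winning G str \<longleftrightarrow> obs_strategy G str \<and>
     (\<forall>os as. is_play G os as \<and> consistent str os as \<longrightarrow>
        (\<forall>qs\<in>concretisation G os as. low_mp G qs as \<ge> 0))"

definition eve_wins :: "('q, 'a) mpg \<Rightarrow> bool" where
  "eve_wins G \<longleftrightarrow> (\<exists>str. winning G str)"

definition lo_states :: "('q, 'a) mpg \<Rightarrow> ('q \<times> 'q set) set" where
  "lo_states G = {(q, K). q \<in> K \<and> (\<exists>ob\<in>obs G. K \<subseteq> ob)}"

definition lo_counterpart :: "('q, 'a) mpg \<Rightarrow> ('q \<times> 'q set, 'a) mpg" where
  "lo_counterpart G =
     \<lparr> states = lo_states G,
       init = (init G, {init G}),
       actions = actions G,
       trans = {((q, K), \<sigma>, (q', K')). (q, K) \<in> lo_states G \<and> (q', K') \<in> lo_states G \<and>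
                  (q, \<sigma>, q') \<in> trans G \<and> (\<exists>ob\<in>obs G. K' = post G \<sigma> K \<inter> ob)},
       weight = (\<lambda>((q, K), \<sigma>, (q', K')). weight G (q, \<sigma>, q')),
       obs = {{(q, K) | q. q \<in> K} | K. K \<noteq> {} \<and> (\<exists>ob\<in>obs G. K \<subseteq> ob)} \<rparr>"

end

theory Submission
  imports Defs
begin

text \<open>Weights of \<open>G'\<close> only depend on the first components, so a concrete path of \<open>G'\<close> and its
  projection to \<open>G\<close> have the same mean payoff. An observation of \<open>G'\<close> is contained in an
  observation of \<open>G\<close>, hence a strategy of \<open>G\<close> can be run in \<open>G'\<close> on these coarser
  observations. Conversely, Eve can play in \<open>G\<close> by computing the knowledge sets
  \<open>K\<^sub>0 = {q\<^sub>I}\<close>, \<open>K\<^sub>n\<^sub>+\<^sub>1 = post\<^sub>\<sigma>\<^sub>n(K\<^sub>n) \<inter> o\<^sub>n\<^sub>+\<^sub>1\<close> along the play and feeding them to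
  a strategy of \<open>G'\<close>; every concrete path \<open>q\<^sub>0q\<^sub>1\<dots>\<close> lifts to the path \<open>(q\<^sub>0,K\<^sub>0)(q\<^sub>1,K\<^sub>1)\<dots>\<close>
  of \<open>G'\<close>.\<close>

lemma weight_lo_counterpart: "weight (lo_counterpart G) (x, \<sigma>, y) = weight G (fst x, \<sigma>, fst y)"
  by (cases x; cases y) (simp add: lo_counterpart_def)

lemma low_mp_lo_counterpart: "low_mp (lo_counterpart G) qs' as = low_mp G (fst \<circ> qs') as"
  unfolding low_mp_def by (simp add: weight_lo_counterpart)

lemma trans_lo_counterpart_fst:
  "(x, \<sigma>, y) \<in> trans (lo_counterpart G) \<Longrightarrow> (fst x, \<sigma>, fst y) \<in> trans G"
  by (cases x; cases y) (auto simp: lo_counterpart_def)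

definition underlying_obs :: "('q, 'a) mpg \<Rightarrow> ('q \<times> 'q set) set \<Rightarrow> 'q set" where
  "underlying_obs G X = (SOME ob. ob \<in> obs G \<and> fst ` X \<subseteq> ob)"

lemma underlying_obs:
  assumes "X \<in> obs (lo_counterpart G)"
  shows "underlying_obs G X \<in> obs G" "fst ` X \<subseteq> underlying_obs G X"
proof -
  from assms obtain K ob where K: "ob \<in> obs G" "K \<subseteq> ob" "X = {(q, K) | q. q \<in> K}"
    by (auto simp: lo_counterpart_def)
  then have "fst ` X = K" by (force simp: image_iff)
  with K have "\<exists>ob. ob \<in> obs G \<and> fst ` X \<subseteq> ob" by auto
  then show "underlying_obs G X \<in> obs G" "fst ` X \<subseteq> underlying_obs G X"
    unfolding underlying_obs_def by (metis (mono_tags, lifting) someI_ex)+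
qed

definition lo_strategy_of :: "('q, 'a) mpg \<Rightarrow> ('q, 'a) strategy \<Rightarrow> ('q \<times> 'q set, 'a) strategy" where
  "lo_strategy_of G str = (\<lambda>ol al. str (map (underlying_obs G) ol) al)"

lemma is_play_underlying_obs:
  assumes "is_play (lo_counterpart G) os' as"
  shows "is_play G (underlying_obs G \<circ> os') as"
  unfolding is_play_def
proof (intro conjI allI)
  have "os' i \<in> obs (lo_counterpart G)" for i
    using assms by (simp add: is_play_def)
  note ob = underlying_obs[OF this]
  have "(init G, {init G}) \<in> os' 0"
    using assms by (simp add: is_play_def lo_counterpart_def)
  then show "init G \<in> (underlying_obs G \<circ> os') 0"
    using ob(2)[of 0] by force
  fix i
  show "(underlying_obs G \<circ> os') i \<in> obs G" using ob(1) by simp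
  show "as i \<in> actions G" using assms by (simp add: is_play_def lo_counterpart_def)
  from assms obtain x y where xy: "x \<in> os' i" "y \<in> os' (Suc i)" "(x, as i, y) \<in> trans (lo_counterpart G)"
    unfolding is_play_def by blast
  then have "fst x \<in> (underlying_obs G \<circ> os') i" "fst y \<in> (underlying_obs G \<circ> os') (Suc i)"
    using ob(2)[of i] ob(2)[of "Suc i"] by auto
  with trans_lo_counterpart_fst[OF xy(3)]
  show "\<exists>q\<in>(underlying_obs G \<circ> os') i. \<exists>q'\<in>(underlying_obs G \<circ> os') (Suc i). (q, as i, q') \<in> trans G"
    by blast
qed

lemma concretisation_underlying_obs:
  assumes "is_play (lo_counterpart G) os' as" "qs' \<in> concretisation (lo_counterpart G) os' as"
  shows "fst \<circ> qs' \<in> concretisation G (underlying_obs G \<circ> os') as"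
proof -
  have "fst (qs' i) \<in> underlying_obs G (os' i)" for i
    using assms underlying_obs(2)[of "os' i" G] by (force simp: is_play_def concretisation_def)
  moreover have "(fst (qs' i), as i, fst (qs' (Suc i))) \<in> trans G" for i
    using assms(2) by (auto simp: concretisation_def intro: trans_lo_counterpart_fst)
  moreover have "fst (qs' 0) = init G"
    using assms(2) by (simp add: concretisation_def lo_counterpart_def)
  ultimately show ?thesis by (simp add: concretisation_def)
qed

lemma winning_lo_strategy_of:
  assumes "winning G str"
  shows "winning (lo_counterpart G) (lo_strategy_of G str)"
  unfolding winning_def
proof (intro conjI allI impI ballI)
  show "obs_strategy (lo_counterpart G) (lo_strategy_of G str)"
    using assms by (simp add: winning_def obs_strategy_def lo_counterpart_def lo_strategy_of_def)
  fix os' as qs'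
  assume play: "is_play (lo_counterpart G) os' as \<and> consistent (lo_strategy_of G str) os' as"
    and path: "qs' \<in> concretisation (lo_counterpart G) os' as"
  have "consistent str (underlying_obs G \<circ> os') as"
    using play by (simp add: consistent_def lo_strategy_of_def)
  moreover have "is_play G (underlying_obs G \<circ> os') as"
    using play is_play_underlying_obs by blast
  moreover have "fst \<circ> qs' \<in> concretisation G (underlying_obs G \<circ> os') as"
    using play path concretisation_underlying_obs by blast
  ultimately have "low_mp G (fst \<circ> qs') as \<ge> 0"
    using assms unfolding winning_def by blast
  then show "0 \<le> low_mp (lo_counterpart G) qs' as" by (simp add: low_mp_lo_counterpart)
qed

fun knowledge :: "('q, 'a) mpg \<Rightarrow> (nat \<Rightarrow> 'q set) \<Rightarrow> (nat \<Rightarrow> 'a) \<Rightarrow> nat \<Rightarrow> 'q set" where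
  "knowledge G os as 0 = {init G}"
| "knowledge G os as (Suc n) = post G (as n) (knowledge G os as n) \<inter> os (Suc n)"

lemma knowledge_cong:
  "(\<And>i. i \<le> n \<Longrightarrow> os i = os' i) \<Longrightarrow> (\<And>i. i < n \<Longrightarrow> as i = as' i)
     \<Longrightarrow> knowledge G os as n = knowledge G os' as' n"
  by (induction n) auto

lemma concretisation_in_knowledge:
  "qs \<in> concretisation G os as \<Longrightarrow> qs n \<in> knowledge G os as n"
  by (induction n) (auto simp: concretisation_def post_def)

lemma knowledge_subset_obs: "is_play G os as \<Longrightarrow> knowledge G os as n \<subseteq> os n"
  by (cases n) (auto simp: is_play_def)

definition knowledge_obs :: "'q set \<Rightarrow> ('q \<times> 'q set) set" where
  "knowledge_obs K = {(q, K) | q. q \<in> K}"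

text \<open>Prefixes are lists, so \<open>(!)\<close> turns them into sequences; entries beyond the prefix are
  junk but never read, by \<open>knowledge_cong\<close>.\<close>
definition strategy_of_lo :: "('q, 'a) mpg \<Rightarrow> ('q \<times> 'q set, 'a) strategy \<Rightarrow> ('q, 'a) strategy" where
  "strategy_of_lo G str = (\<lambda>ol al.
     str (map (\<lambda>j. knowledge_obs (knowledge G ((!) ol) ((!) al) j)) [0..<length ol]) al)"

lemma trans_lo_counterpart_knowledge:
  assumes play: "is_play G os as" and path: "qs \<in> concretisation G os as"
  shows "((qs n, knowledge G os as n), as n, (qs (Suc n), knowledge G os as (Suc n)))
           \<in> trans (lo_counterpart G)"
proof -
  have lo: "(qs i, knowledge G os as i) \<in> lo_states G" for i
    using concretisation_in_knowledge[OF path] knowledge_subset_obs[OF play] play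
    unfolding lo_states_def is_play_def by blast
  have "os (Suc n) \<in> obs G" "(qs n, as n, qs (Suc n)) \<in> trans G"
    using play path by (auto simp: is_play_def concretisation_def)
  then show ?thesis
    using lo[of n] lo[of "Suc n"] by (auto simp: lo_counterpart_def)
qed

lemma is_play_knowledge_obs:
  assumes play: "is_play G os as" and path: "qs \<in> concretisation G os as"
  shows "is_play (lo_counterpart G) (\<lambda>n. knowledge_obs (knowledge G os as n)) as"
  unfolding is_play_def
proof (intro conjI allI)
  show "init (lo_counterpart G) \<in> knowledge_obs (knowledge G os as 0)"
    by (simp add: lo_counterpart_def knowledge_obs_def)
  fix i
  show "knowledge_obs (knowledge G os as i) \<in> obs (lo_counterpart G)"
    using play concretisation_in_knowledge[OF path, of i] knowledge_subset_obs[OF play, of i]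
    unfolding is_play_def lo_counterpart_def knowledge_obs_def by auto
  show "as i \<in> actions (lo_counterpart G)"
    using play by (simp add: is_play_def lo_counterpart_def)
  show "\<exists>x\<in>knowledge_obs (knowledge G os as i). \<exists>y\<in>knowledge_obs (knowledge G os as (Suc i)).
          (x, as i, y) \<in> trans (lo_counterpart G)"
    using trans_lo_counterpart_knowledge[OF play path, of i] concretisation_in_knowledge[OF path]
    unfolding knowledge_obs_def by blast
qed

lemma concretisation_knowledge_obs:
  assumes play: "is_play G os as" and path: "qs \<in> concretisation G os as"
  shows "(\<lambda>n. (qs n, knowledge G os as n))
           \<in> concretisation (lo_counterpart G) (\<lambda>n. knowledge_obs (knowledge G os as n)) as"
  using path trans_lo_counterpart_knowledge[OF play path] concretisation_in_knowledge[OF path]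
  unfolding concretisation_def knowledge_obs_def by (simp add: lo_counterpart_def)

lemma consistent_knowledge_obs:
  assumes "consistent (strategy_of_lo G str) os as"
  shows "consistent str (\<lambda>n. knowledge_obs (knowledge G os as n)) as"
  unfolding consistent_def
proof
  fix i
  let ?ol = "map os [0..<Suc i]" and ?al = "map as [0..<i]"
  have "as i = str (map (\<lambda>j. knowledge_obs (knowledge G ((!) ?ol) ((!) ?al) j)) [0..<Suc i]) ?al"
    using assms unfolding consistent_def strategy_of_lo_def by (metis length_map length_upt diff_zero)
  also have "map (\<lambda>j. knowledge_obs (knowledge G ((!) ?ol) ((!) ?al) j)) [0..<Suc i]
      = map (\<lambda>j. knowledge_obs (knowledge G os as j)) [0..<Suc i]"
    by (intro map_cong refl arg_cong[where f = knowledge_obs] knowledge_cong)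
      (auto simp del: upt_Suc)
  finally show "as i = str (map (\<lambda>j. knowledge_obs (knowledge G os as j)) [0..<Suc i]) ?al" .
qed

lemma winning_strategy_of_lo:
  assumes "winning (lo_counterpart G) str"
  shows "winning G (strategy_of_lo G str)"
  unfolding winning_def
proof (intro conjI allI impI ballI)
  show "obs_strategy G (strategy_of_lo G str)"
    using assms by (simp add: winning_def obs_strategy_def lo_counterpart_def strategy_of_lo_def)
  fix os as qs
  assume play: "is_play G os as \<and> consistent (strategy_of_lo G str) os as"
    and path: "qs \<in> concretisation G os as"
  then have "low_mp (lo_counterpart G) (\<lambda>n. (qs n, knowledge G os as n)) as \<ge> 0"
    using assms is_play_knowledge_obs[of G os as qs] concretisation_knowledge_obs[of G os as qs]
      consistent_knowledge_obs[of G str os as]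
    unfolding winning_def by blast
  then show "0 \<le> low_mp G qs as" by (simp add: low_mp_lo_counterpart comp_def)
qed

theorem theorem13:
  fixes G :: "('q, 'a) mpg"
  assumes "mpg_po G"
  shows "eve_wins G \<longleftrightarrow> eve_wins (lo_counterpart G)"
  unfolding eve_wins_def using winning_lo_strategy_of winning_strategy_of_lo by blast

end
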